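(* Let $H$ be a strong symplectic Hilbert space with signature $(n_+,n_-)$ and let $W\subseteq H$ be a maximal positive-definite subspace. If $n_+<\infty$ or $n_-<\infty$, then $W$ is maximally completely positive-definite.
   Context: All Hilbert spaces are complex and separable. A strong symplectic structure on a Hilbert space $H$ is a continuous sesquilinear form $[\cdot,\cdot]$ (linear in the first, conjugate-linear in the second variable) with $[y,x]=-\overline{[x,y]}$, non-degenerate, and such that $x\mapsto[\cdot,x]$ maps $H$ onto its dual. For $L\subseteq H$, $L^{\perp_s}=\{x:[x,y]=0\ \forall y\in L\}$. A closed subspace $L\subseteq H$ is maximal positive-definite if $-i[x,x]>0$ for every $0\ne x\in L$ and $L$ is not properly contained in a subspace with the same property; it is maximally completely positive-definite if moreover there is $c_L>0$ with $-i[x,x]\ge c_L\|x\|^2$ for all $x\in L$. If $L$ is maximally completely positive-definite then $H=L\oplus L^{\perp_s}$ (topological direct sum), and the numbers $n_+=\dim L$, $n_-=\dim L^{\perp_s}$ do not depend on the choice of $L$; $(n_+,n_-)$ is the signature of $H$ (the signature of the Hermitian form $-i[\cdot,\cdot]$). *)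

theory Defs
  imports "HOL-Analysis.Analysis"
begin

text \<open>A complex Hilbert space is encoded as a real Hilbert space (type class
  real_inner + complete_space, real inner product = real part of the complex one)
  together with an orthogonal complex structure J (multiplication by the imaginary unit).\<close>

definition complex_structure :: "('a::real_normed_vector \<Rightarrow> 'a) \<Rightarrow> bool" where
  "complex_structure J \<longleftrightarrow> linear J \<and> (\<forall>x. J (J x) = - x) \<and> (\<forall>x. norm (J x) = norm x)"

definition cscale :: "('a::real_vector \<Rightarrow> 'a) \<Rightarrow> complex \<Rightarrow> 'a \<Rightarrow> 'a" where
  "cscale J c x = Re c *\<^sub>R x + Im c *\<^sub>R J x"

definition separable_space :: "'a::metric_space itself \<Rightarrow> bool" where
  "separable_space _ \<longleftrightarrow> (\<exists>D::'a set. countable D \<and> closure D = UNIV)"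

definition cont_clinear_functional :: "('a::real_normed_vector \<Rightarrow> 'a) \<Rightarrow> ('a \<Rightarrow> complex) \<Rightarrow> bool" where
  "cont_clinear_functional J f \<longleftrightarrow>
     (\<forall>x y. f (x + y) = f x + f y) \<and> (\<forall>c x. f (cscale J c x) = c * f x) \<and>
     (\<exists>C. \<forall>x. norm (f x) \<le> C * norm x)"

definition strong_symplectic :: "('a::real_normed_vector \<Rightarrow> 'a) \<Rightarrow> ('a \<Rightarrow> 'a \<Rightarrow> complex) \<Rightarrow> bool" where
  "strong_symplectic J \<omega> \<longleftrightarrow>
     \<comment> \<open>sesquilinear: linear in the first variable\<close>
     (\<forall>x y z. \<omega> (x + y) z = \<omega> x z + \<omega> y z) \<and>
     (\<forall>c x y. \<omega> (cscale J c x) y = c * \<omega> x y) \<and>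
     \<comment> \<open>conjugate-linear in the second variable\<close>
     (\<forall>x y z. \<omega> x (y + z) = \<omega> x y + \<omega> x z) \<and>
     (\<forall>c x y. \<omega> x (cscale J c y) = cnj c * \<omega> x y) \<and>
     \<comment> \<open>continuous\<close>
     (\<exists>C. \<forall>x y. norm (\<omega> x y) \<le> C * norm x * norm y) \<and>
     \<comment> \<open>skew-Hermitian\<close>
     (\<forall>x y. \<omega> y x = - cnj (\<omega> x y)) \<and>
     \<comment> \<open>non-degenerate\<close>
     (\<forall>x. (\<forall>y. \<omega> y x = 0) \<longrightarrow> x = 0) \<and>
     (\<forall>x. (\<forall>y. \<omega> x y = 0) \<longrightarrow> x = 0) \<and>
     \<comment> \<open>x \<mapsto> \<omega>(\<cdot>, x) maps H onto its dual\<close>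
     (\<forall>f. cont_clinear_functional J f \<longrightarrow> (\<exists>x. \<forall>y. f y = \<omega> y x))"

definition symp_orth :: "('a \<Rightarrow> 'a \<Rightarrow> complex) \<Rightarrow> 'a set \<Rightarrow> 'a set" where
  "symp_orth \<omega> L = {x. \<forall>y\<in>L. \<omega> x y = 0}"

definition closed_csubspace :: "('a::real_normed_vector \<Rightarrow> 'a) \<Rightarrow> 'a set \<Rightarrow> bool" where
  "closed_csubspace J L \<longleftrightarrow> closed L \<and> subspace L \<and> (\<forall>x\<in>L. J x \<in> L)"

definition pos_def :: "('a::real_normed_vector \<Rightarrow> 'a \<Rightarrow> complex) \<Rightarrow> 'a set \<Rightarrow> bool" where
  "pos_def \<omega> L \<longleftrightarrow> (\<forall>x\<in>L. x \<noteq> 0 \<longrightarrow> Re (- \<i> * \<omega> x x) > 0)"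

definition max_pos_def :: "('a::real_normed_vector \<Rightarrow> 'a) \<Rightarrow> ('a \<Rightarrow> 'a \<Rightarrow> complex) \<Rightarrow> 'a set \<Rightarrow> bool" where
  "max_pos_def J \<omega> L \<longleftrightarrow> closed_csubspace J L \<and> pos_def \<omega> L \<and>
     \<not> (\<exists>M. closed_csubspace J M \<and> pos_def \<omega> M \<and> L \<subset> M)"

definition max_compl_pos_def :: "('a::real_normed_vector \<Rightarrow> 'a) \<Rightarrow> ('a \<Rightarrow> 'a \<Rightarrow> complex) \<Rightarrow> 'a set \<Rightarrow> bool" where
  "max_compl_pos_def J \<omega> L \<longleftrightarrow> max_pos_def J \<omega> L \<and>
     (\<exists>c>0. \<forall>x\<in>L. Re (- \<i> * \<omega> x x) \<ge> c * (norm x)\<^sup>2)"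

text \<open>Finite-dimensional subset (real and complex finite-dimensionality coincide).\<close>
definition fin_dim :: "'a::real_vector set \<Rightarrow> bool" where
  "fin_dim S \<longleftrightarrow> (\<exists>B. finite B \<and> S \<subseteq> span B)"

end

theory Submission
  imports Defs
begin

text \<open>Write \<open>Q x = -i[x,x]\<close>. On a maximally completely positive-definite \<open>L\<close> the form
  \<open>Q\<close> dominates \<open>c \<parallel>x\<parallel>\<^sup>2\<close>, so minimising \<open>Q (l - x)\<close> over \<open>l \<in> L\<close> splits every vector
  as \<open>l + m\<close> with \<open>m \<in> L\<^sup>\<perp>\<close> and \<open>c \<parallel>l\<parallel> \<le> K \<parallel>x\<parallel>\<close>. The positive-definite \<open>W\<close> is
  uniformly positive as soon as every bounded sequence in \<open>W\<close> along which \<open>Q\<close> tends to \<open>0\<close>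
  has a convergent subsequence, since its limit would be a unit vector with \<open>Q = 0\<close>.

  Here \<open>L\<^sup>\<perp>\<close> is the symplectic complement \<open>symp_orth \<omega> L\<close>.
  If \<open>L\<close> is finite-dimensional, maximality of \<open>L\<close> forces \<open>Q \<le> 0\<close> on \<open>L\<^sup>\<perp>\<close>; hence
  \<open>W\<close> meets the finite-codimensional \<open>L\<^sup>\<perp>\<close> trivially and is finite-dimensional itself.
  If \<open>L\<^sup>\<perp>\<close> is finite-dimensional, split \<open>y\<^sub>n = l\<^sub>n + m\<^sub>n\<close>: the \<open>m\<^sub>n\<close> subconverge, and as
  \<open>Q \<ge> 0\<close> on \<open>W\<close> the parallelogram law bounds \<open>c \<parallel>l\<^sub>n - l\<^sub>k\<parallel>\<^sup>2\<close> by
  \<open>2 Q y\<^sub>n + 2 Q y\<^sub>k + K \<parallel>m\<^sub>n - m\<^sub>k\<parallel>\<^sup>2\<close>, so the \<open>l\<^sub>n\<close> subconverge too.\<close>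

lemma Cauchy_if_dist_square_le_sum:
  fixes X :: "nat \<Rightarrow> 'a::real_normed_vector"
  assumes "\<And>n k. (norm (X n - X k))\<^sup>2 \<le> \<alpha> n + \<alpha> k" and "\<alpha> \<longlonglongrightarrow> 0"
  shows "Cauchy X"
proof (rule metric_CauchyI)
  fix e :: real assume e: "e > 0"
  then obtain N where N: "\<And>n. n \<ge> N \<Longrightarrow> \<alpha> n < e\<^sup>2 / 2"
    using order_tendstoD(2)[OF assms(2), of "e\<^sup>2 / 2"] by (auto simp: eventually_sequentially)
  have "dist (X m) (X n) < e" if "m \<ge> N" "n \<ge> N" for m n
  proof -
    have "(norm (X m - X n))\<^sup>2 < e\<^sup>2" using assms(1)[of m n] N[OF that(1)] N[OF that(2)] by linarith
    then show ?thesis using e by (simp add: dist_norm power_less_imp_less_base)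
  qed
  then show "\<exists>M. \<forall>m\<ge>M. \<forall>n\<ge>M. dist (X m) (X n) < e" by blast
qed

lemma linear_coeff_zero_if_quadratic_nonneg:
  fixes a b :: real
  assumes "\<And>t. 0 \<le> 2 * t * a + t\<^sup>2 * b"
  shows "a = 0"
proof (rule ccontr)
  assume a: "a \<noteq> 0"
  define s where "s = 1 / (\<bar>b\<bar> + 1)"
  have s: "s > 0" "s * b < 1" unfolding s_def by (auto simp: field_simps)
  have "0 \<le> a\<^sup>2 * s * (s * b - 2)"
    using assms[of "- (a * s)"] by (simp add: power2_eq_square algebra_simps)
  also have "\<dots> < 0" using a s by (intro mult_pos_neg) auto
  finally show False by simp
qed

section \<open>Finite-dimensional subspaces of normed spaces\<close>

lemma closed_if_bounded_sequences_subconverge: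
  fixes S :: "'a::real_normed_vector set"
  assumes "\<And>f :: nat \<Rightarrow> 'a. (\<And>n. f n \<in> S) \<Longrightarrow> bounded (range f) \<Longrightarrow>
             \<exists>l\<in>S. \<exists>r. strict_mono r \<and> (f \<circ> r) \<longlonglongrightarrow> l"
  shows "closed S"
proof (subst closed_sequential_limits, intro allI impI)
  fix f l assume f: "(\<forall>n. f n \<in> S) \<and> f \<longlonglongrightarrow> l"
  have "\<exists>l'\<in>S. \<exists>r. strict_mono r \<and> (f \<circ> r) \<longlonglongrightarrow> l'"
    by (rule assms) (use f in \<open>auto intro: convergent_imp_bounded\<close>)
  then obtain l' r where "l' \<in> S" "strict_mono r" "(f \<circ> r) \<longlonglongrightarrow> l'"
    by blast
  moreover have "(f \<circ> r) \<longlonglongrightarrow> l"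
    using f \<open>strict_mono r\<close> LIMSEQ_subseq_LIMSEQ by blast
  ultimately show "l \<in> S" using LIMSEQ_unique by metis
qed

lemma abs_coeff_mult_infdist_le_norm:
  fixes b x :: "'a::real_normed_vector"
  assumes "subspace V" "x - t *\<^sub>R b \<in> V"
  shows "\<bar>t\<bar> * infdist b V \<le> norm x"
proof (cases "t = 0")
  case False
  define v where "v = - inverse t *\<^sub>R (x - t *\<^sub>R b)"
  have "v \<in> V" unfolding v_def using assms by (intro subspace_scale)
  then have "infdist b V \<le> dist b v" by (rule infdist_le)
  also have "b - v = inverse t *\<^sub>R x"
    using False by (simp add: v_def algebra_simps)
  then have "dist b v = norm x / \<bar>t\<bar>"
    by (simp add: dist_norm divide_inverse abs_inverse mult.commute)
  finally show ?thesis using False by (simp add: field_simps)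
qed simp

lemma bounded_coeffs_span_insert:
  fixes f :: "nat \<Rightarrow> 'a::real_normed_vector"
  assumes "closed (span S)" "b \<notin> span S"
    and "\<And>n. f n \<in> span (insert b S)" "bounded (range f)"
  obtains t where "\<And>n. f n - t n *\<^sub>R b \<in> span S" "bounded (range t)"
proof -
  have "infdist b (span S) \<noteq> 0"
    using assms(1,2) in_closed_iff_infdist_zero span_zero by blast
  then have d: "infdist b (span S) > 0"
    using infdist_nonneg[of b "span S"] by linarith
  have "\<forall>n. \<exists>t. f n - t *\<^sub>R b \<in> span S"
    using assms(3) by (simp add: span_insert)
  then obtain t where t: "\<And>n. f n - t n *\<^sub>R b \<in> span S"
    by metis
  obtain M where M: "\<And>n. norm (f n) \<le> M"
    using assms(4) by (auto simp: bounded_iff)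
  have "\<bar>t n\<bar> \<le> M / infdist b (span S)" for n
  proof -
    have "\<bar>t n\<bar> * infdist b (span S) \<le> M"
      using abs_coeff_mult_infdist_le_norm[OF subspace_span t[of n]] M[of n] by linarith
    then show ?thesis
      using d by (simp add: pos_le_divide_eq)
  qed
  then have "bounded (range t)"
    unfolding bounded_iff by (intro exI[of _ "M / infdist b (span S)"]) auto
  with t show thesis
    by (rule that)
qed

lemma bounded_sequence_in_finite_span_subconverges:
  fixes B :: "'a::real_normed_vector set" and f :: "nat \<Rightarrow> 'a"
  assumes "finite B" "\<And>n. f n \<in> span B" "bounded (range f)"
  shows "\<exists>l\<in>span B. \<exists>r. strict_mono r \<and> (f \<circ> r) \<longlonglongrightarrow> l"
  using assms
proof (induction B arbitrary: f rule: finite_induct)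
  case (empty f)
  then have "(f \<circ> id) \<longlonglongrightarrow> 0"
    by (simp add: o_def)
  then show ?case
    using strict_mono_id span_zero by blast
next
  case (insert b S f)
  show ?case
  proof (cases "b \<in> span S")
    case True
    then show ?thesis
      using insert.IH[of f] insert.prems by (simp add: span_redundant)
  next
    case False
    have "closed (span S)"
      using insert.IH by (rule closed_if_bounded_sequences_subconverge)
    then obtain t where t: "\<And>n. f n - t n *\<^sub>R b \<in> span S" "bounded (range t)"
      using bounded_coeffs_span_insert[OF _ False insert.prems] by blast
    define g where "g n = f n - t n *\<^sub>R b" for n
    have "bounded (range (\<lambda>n. t n *\<^sub>R b))"
      using bounded_linear_image[OF t(2) bounded_linear_scaleR_left] by (simp add: image_image)
    then have "bounded (range g)"
      unfolding g_def using insert.prems(2) by (intro bounded_minus_comp)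
    then have "\<exists>l\<in>span S. \<exists>r. strict_mono r \<and> (g \<circ> r) \<longlonglongrightarrow> l"
      using t(1) by (intro insert.IH) (simp_all add: g_def)
    then obtain l r where l: "l \<in> span S" "strict_mono r" "(g \<circ> r) \<longlonglongrightarrow> l"
      by blast
    have "bounded (range (t \<circ> r))"
      using t(2) by (rule bounded_subset) auto
    then obtain \<tau> r' where r': "strict_mono r'" "(t \<circ> r \<circ> r') \<longlonglongrightarrow> \<tau>"
      using bounded_imp_convergent_subsequence by blast
    have "(\<lambda>n. (g \<circ> r \<circ> r') n + (t \<circ> r \<circ> r') n *\<^sub>R b) \<longlonglongrightarrow> l + \<tau> *\<^sub>R b"
      using LIMSEQ_subseq_LIMSEQ[OF l(3) r'(1)] r'(2) by (intro tendsto_intros)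
    moreover have "(\<lambda>n. (g \<circ> r \<circ> r') n + (t \<circ> r \<circ> r') n *\<^sub>R b) = f \<circ> (r \<circ> r')"
      by (auto simp: g_def)
    moreover have "l + \<tau> *\<^sub>R b \<in> span (insert b S)"
      using l(1) by (auto simp: span_insert intro: exI[of _ \<tau>])
    ultimately show ?thesis
      using strict_mono_o[OF l(2) r'(1)] by metis
  qed
qed

lemma closed_span_finite:
  fixes B :: "'a::real_normed_vector set"
  assumes "finite B"
  shows "closed (span B)"
  using bounded_sequence_in_finite_span_subconverges[OF assms]
  by (rule closed_if_bounded_sequences_subconverge)

lemma fin_dim_obtain_basis:
  assumes "fin_dim L" "subspace L"
  obtains B where "B \<subseteq> L" "finite B" "span B = L"
proof -
  obtain B0 where B0: "finite B0" "L \<subseteq> span B0"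
    using assms(1) unfolding fin_dim_def by blast
  obtain B where B: "B \<subseteq> L" "independent B" "L \<subseteq> span B"
    by (rule basis_exists)
  have "finite B"
    using independent_span_bound[OF B0(1) B(2)] B(1) B0(2) by blast
  moreover have "span B = L"
    using span_minimal[OF B(1) assms(2)] B(3) by blast
  ultimately show thesis
    using that B(1) by blast
qed

lemma fin_dim_if_joint_kernel_trivial:
  fixes F :: "('a::real_vector \<Rightarrow> real) set"
  assumes "finite F" "\<forall>\<psi>\<in>F. linear \<psi>" "subspace W"
    and "\<forall>x\<in>W. (\<forall>\<psi>\<in>F. \<psi> x = 0) \<longrightarrow> x = 0"
  shows "fin_dim W"
  using assms
proof (induction F arbitrary: W rule: finite_induct)
  case empty
  then have "W \<subseteq> span {}" by auto
  then show ?case unfolding fin_dim_def by blast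
next
  case (insert \<psi> F)
  have "fin_dim (W \<inter> {x. \<psi> x = 0})"
    using insert.prems
    by (intro insert.IH) (auto intro: subspace_inter real_vector.linear_subspace_kernel)
  then obtain B where B: "finite B" "W \<inter> {x. \<psi> x = 0} \<subseteq> span B"
    unfolding fin_dim_def by blast
  show ?case
  proof (cases "\<forall>x\<in>W. \<psi> x = 0")
    case True
    then show ?thesis using B unfolding fin_dim_def by blast
  next
    case False
    then obtain w where w: "w \<in> W" "\<psi> w \<noteq> 0" by auto
    have "x \<in> span (insert w B)" if x: "x \<in> W" for x
    proof -
      let ?k = "\<psi> x / \<psi> w"
      have "x - ?k *\<^sub>R w \<in> W"
        using x w insert.prems(2) by (intro subspace_diff subspace_scale)
      moreover have "\<psi> (x - ?k *\<^sub>R w) = 0"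
        using w insert.prems(1) by (simp add: linear_diff linear_scale)
      ultimately show ?thesis using B by (auto simp: span_insert)
    qed
    then show ?thesis using B unfolding fin_dim_def by blast
  qed
qed

section \<open>The form \<open>-i[x,x]\<close> of a strong symplectic structure\<close>

locale symplectic_hilbert =
  fixes J :: "'a::{real_normed_vector, complete_space} \<Rightarrow> 'a"
    and \<omega> :: "'a \<Rightarrow> 'a \<Rightarrow> complex"
  assumes complex_structure: "complex_structure J"
    and strong_symplectic: "strong_symplectic J \<omega>"
begin

definition Q :: "'a \<Rightarrow> real" where
  "Q x = Im (\<omega> x x)"

lemma omega_add_left: "\<omega> (x + y) z = \<omega> x z + \<omega> y z"
  using strong_symplectic unfolding strong_symplectic_def by (elim conjE allE) assumption

lemma omega_add_right: "\<omega> x (y + z) = \<omega> x y + \<omega> x z"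
  using strong_symplectic unfolding strong_symplectic_def by (elim conjE allE) assumption

lemma omega_cscale_left: "\<omega> (cscale J c x) y = c * \<omega> x y"
  using strong_symplectic unfolding strong_symplectic_def by (elim conjE allE) assumption

lemma omega_cscale_right: "\<omega> x (cscale J c y) = cnj c * \<omega> x y"
  using strong_symplectic unfolding strong_symplectic_def by (elim conjE allE) assumption

lemma omega_skew: "\<omega> y x = - cnj (\<omega> x y)"
  using strong_symplectic unfolding strong_symplectic_def by (elim conjE allE) assumption

lemma omega_scaleR_left: "\<omega> (r *\<^sub>R x) y = r *\<^sub>R \<omega> x y"
  using omega_cscale_left[of "complex_of_real r" x y]
  by (simp add: cscale_def scaleR_conv_of_real)

lemma omega_scaleR_right: "\<omega> x (r *\<^sub>R y) = r *\<^sub>R \<omega> x y"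
  using omega_cscale_right[of x "complex_of_real r" y]
  by (simp add: cscale_def scaleR_conv_of_real)

sublocale omega: bounded_bilinear \<omega>
proof (unfold_locales; (intro omega_add_left omega_add_right omega_scaleR_left omega_scaleR_right)?)
  have "\<exists>C. \<forall>x y. norm (\<omega> x y) \<le> C * norm x * norm y"
    using strong_symplectic unfolding strong_symplectic_def by (elim conjE) assumption
  then obtain C where "\<And>x y. norm (\<omega> x y) \<le> C * norm x * norm y"
    by blast
  then have "\<forall>x y. norm (\<omega> x y) \<le> norm x * norm y * C"
    by (simp add: ac_simps)
  then show "\<exists>K. \<forall>x y. norm (\<omega> x y) \<le> norm x * norm y * K" ..
qed

lemma linear_J: "linear J"
  using complex_structure unfolding complex_structure_def by (elim conjE)

lemma J_J [simp]: "J (J x) = - x"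
  using complex_structure unfolding complex_structure_def by (elim conjE allE) assumption

lemma omega_J_right: "\<omega> x (J y) = - \<i> * \<omega> x y"
  using omega_cscale_right[of x \<i> y] by (simp add: cscale_def)

lemma omega_eq_0_commute: "\<omega> x y = 0 \<Longrightarrow> \<omega> y x = 0"
  using omega_skew[of y x] by simp

lemma Q_eq: "Re (- \<i> * \<omega> x x) = Q x"
  by (simp add: Q_def)

lemma Q_0 [simp]: "Q 0 = 0"
  by (simp add: Q_def omega.zero_left)

lemma Q_add: "Q (x + y) = Q x + Q y + 2 * Im (\<omega> x y)"
  unfolding Q_def by (simp add: omega_add_left omega_add_right omega_skew[of y x])

lemma Q_scaleR: "Q (r *\<^sub>R x) = r\<^sup>2 * Q x"
  unfolding Q_def by (simp add: omega_scaleR_left omega_scaleR_right power2_eq_square)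

lemma Q_diff: "Q (x - y) = Q x + Q y - 2 * Im (\<omega> x y)"
  using Q_add[of x "- y"] Q_scaleR[of "- 1" y] by (simp add: omega.minus_right)

lemma Q_cscale: "Q (cscale J c x) = (cmod c)\<^sup>2 * Q x"
proof -
  have "\<omega> (cscale J c x) (cscale J c x) = (c * cnj c) * \<omega> x x"
    by (simp add: omega_cscale_left omega_cscale_right)
  also have "c * cnj c = complex_of_real ((cmod c)\<^sup>2)"
    by (simp add: complex_mult_cnj cmod_def)
  finally show ?thesis unfolding Q_def by simp
qed

lemma Q_parallelogram: "Q (x + y) + Q (x - y) = 2 * Q x + 2 * Q y"
  by (simp add: Q_add Q_diff)

lemma abs_Q_le:
  assumes "\<And>a b. norm (\<omega> a b) \<le> norm a * norm b * K"
  shows "\<bar>Q x\<bar> \<le> K * (norm x)\<^sup>2"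
  using abs_Im_le_cmod[of "\<omega> x x"] assms[of x x]
  unfolding Q_def by (simp add: power2_eq_square mult.commute)

lemma Q_tendsto: "f \<longlonglongrightarrow> l \<Longrightarrow> (\<lambda>n. Q (f n)) \<longlonglongrightarrow> Q l"
  unfolding Q_def by (intro tendsto_Im omega.tendsto)

lemma Q_nonneg_if_pos_def: "pos_def \<omega> W \<Longrightarrow> x \<in> W \<Longrightarrow> 0 \<le> Q x"
  unfolding pos_def_def Q_eq by (cases "x = 0") auto

lemma subspace_symp_orth: "subspace (symp_orth \<omega> L)"
  unfolding subspace_def symp_orth_def
  by (simp add: omega.zero_left omega_add_left omega_scaleR_left)

section \<open>Symplectic decomposition along a completely positive subspace\<close>

lemma Q_diff_bdd_below:
  assumes "c > 0" "\<forall>y\<in>L. c * (norm y)\<^sup>2 \<le> Q y"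
  shows "bdd_below ((\<lambda>l. Q (l - x)) ` L)"
proof -
  obtain K where K: "\<And>a b. norm (\<omega> a b) \<le> norm a * norm b * K"
    using omega.bounded by blast
  have "- (K\<^sup>2 * (norm x)\<^sup>2 / c + K * (norm x)\<^sup>2) \<le> Q (l - x)" if l: "l \<in> L" for l
  proof -
    have "Q (l - x) = Q l + Q x - 2 * Im (\<omega> l x)"
      by (rule Q_diff)
    moreover have "c * (norm l)\<^sup>2 \<le> Q l"
      using assms(2) l by blast
    moreover have "- (K * (norm x)\<^sup>2) \<le> Q x"
      using abs_Q_le[OF K, of x] by linarith
    moreover have "Im (\<omega> l x) \<le> K * norm l * norm x"
      using abs_Im_le_cmod[of "\<omega> l x"] K[of l x] by (simp add: ac_simps)
    moreover have "0 \<le> (c * norm l - K * norm x)\<^sup>2 / c"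
      using assms(1) by simp
    moreover have "(c * norm l - K * norm x)\<^sup>2 / c
        = c * (norm l)\<^sup>2 - 2 * (K * norm l * norm x) + K\<^sup>2 * (norm x)\<^sup>2 / c"
      using assms(1) by (simp add: power2_eq_square field_simps)
    ultimately show ?thesis
      by linarith
  qed
  then show ?thesis
    by (rule bdd_belowI2)
qed

text \<open>The parallelogram law and coercivity give
  \<open>c \<parallel>l\<^sub>n - l\<^sub>k\<parallel>\<^sup>2 \<le> 2 (Q (l\<^sub>n - x) - \<mu>) + 2 (Q (l\<^sub>k - x) - \<mu>)\<close>, because the midpoint of
  \<open>l\<^sub>n\<close> and \<open>l\<^sub>k\<close> lies in \<open>L\<close>.\<close>

lemma Cauchy_if_Q_diff_minimizing:
  assumes L: "subspace L" "c > 0" "\<forall>y\<in>L. c * (norm y)\<^sup>2 \<le> Q y"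
    and ls: "\<And>n. ls n \<in> L" "(\<lambda>n. Q (ls n - x)) \<longlonglongrightarrow> \<mu>"
    and \<mu>_le: "\<forall>l\<in>L. \<mu> \<le> Q (l - x)"
  shows "Cauchy ls"
proof -
  define \<alpha> where "\<alpha> n = 2 * (Q (ls n - x) - \<mu>) / c" for n
  have "(norm (ls n - ls k))\<^sup>2 \<le> \<alpha> n + \<alpha> k" for n k
  proof -
    define mid where "mid = (1/2) *\<^sub>R (ls n + ls k)"
    have "mid \<in> L"
      unfolding mid_def using ls(1) L(1) by (intro subspace_scale subspace_add)
    moreover have "(ls n - x) + (ls k - x) = 2 *\<^sub>R (mid - x)"
      unfolding mid_def by (simp add: algebra_simps scaleR_2)
    ultimately have "4 * \<mu> \<le> Q ((ls n - x) + (ls k - x))"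
      using \<mu>_le by (simp add: Q_scaleR)
    moreover have "Q ((ls n - x) + (ls k - x)) + Q (ls n - ls k) = 2 * Q (ls n - x) + 2 * Q (ls k - x)"
      using Q_parallelogram[of "ls n - x" "ls k - x"] by simp
    moreover have "c * (norm (ls n - ls k))\<^sup>2 \<le> Q (ls n - ls k)"
      using L ls(1) by (simp add: subspace_diff)
    moreover have "c * (\<alpha> n + \<alpha> k) = 2 * Q (ls n - x) + 2 * Q (ls k - x) - 4 * \<mu>"
      using L(2) by (simp add: \<alpha>_def field_simps)
    ultimately have "c * (norm (ls n - ls k))\<^sup>2 \<le> c * (\<alpha> n + \<alpha> k)"
      by linarith
    then show ?thesis
      using L(2) by simp
  qed
  moreover have "\<alpha> \<longlonglongrightarrow> 2 * (\<mu> - \<mu>) / c"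
    unfolding \<alpha>_def using L(2) by (intro tendsto_intros ls(2)) simp
  ultimately show ?thesis
    by (intro Cauchy_if_dist_square_le_sum[of ls \<alpha>]) simp_all
qed

lemma exists_Q_diff_minimizer:
  assumes L: "closed L" "subspace L"
    and c: "c > 0" "\<forall>y\<in>L. c * (norm y)\<^sup>2 \<le> Q y"
  shows "\<exists>l\<in>L. \<forall>l'\<in>L. Q (l - x) \<le> Q (l' - x)"
proof -
  define \<mu> where "\<mu> = Inf ((\<lambda>l. Q (l - x)) ` L)"
  have bdd: "bdd_below ((\<lambda>l. Q (l - x)) ` L)"
    using c by (rule Q_diff_bdd_below)
  have \<mu>_le: "\<forall>l\<in>L. \<mu> \<le> Q (l - x)"
    unfolding \<mu>_def using bdd by (simp add: cInf_lower)
  have "(\<lambda>l. Q (l - x)) ` L \<noteq> {}"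
    using subspace_0[OF L(2)] by blast
  then have "\<mu> \<in> closure ((\<lambda>l. Q (l - x)) ` L)"
    unfolding \<mu>_def using bdd by (rule closure_contains_Inf)
  then obtain v where v: "\<And>n. v n \<in> (\<lambda>l. Q (l - x)) ` L" "v \<longlonglongrightarrow> \<mu>"
    unfolding closure_sequential by blast
  then have "\<forall>n. \<exists>l. l \<in> L \<and> v n = Q (l - x)"
    by blast
  then obtain ls where ls: "\<forall>n. ls n \<in> L \<and> v n = Q (ls n - x)"
    by metis
  then have ls_L: "ls n \<in> L" for n
    by blast
  have "v = (\<lambda>n. Q (ls n - x))"
    using ls by auto
  with v(2) have Q_ls: "(\<lambda>n. Q (ls n - x)) \<longlonglongrightarrow> \<mu>"
    by simp
  have "Cauchy ls"
    using L(2) c ls_L Q_ls \<mu>_le by (rule Cauchy_if_Q_diff_minimizing)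
  then obtain l where l: "ls \<longlonglongrightarrow> l"
    using Cauchy_convergent_iff convergent_def by blast
  have "l \<in> L"
    using closed_sequentially[OF L(1) _ l] ls_L by blast
  moreover have "(\<lambda>n. Q (ls n - x)) \<longlonglongrightarrow> Q (l - x)"
    by (intro Q_tendsto tendsto_intros l)
  then have "Q (l - x) = \<mu>"
    using Q_ls by (rule LIMSEQ_unique)
  ultimately show ?thesis
    using \<mu>_le by auto
qed

text \<open>First-order condition at the minimiser: perturbing along \<open>y\<close> and \<open>J y\<close> kills
  the imaginary and the real part of \<open>[l - x, y]\<close>.\<close>

lemma Q_diff_minimizer_in_symp_orth:
  assumes L: "subspace L" "\<forall>y\<in>L. J y \<in> L"
    and l: "l \<in> L" "\<forall>l'\<in>L. Q (l - x) \<le> Q (l' - x)"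
  shows "x - l \<in> symp_orth \<omega> L"
proof -
  have Im_0: "Im (\<omega> (l - x) y) = 0" if y: "y \<in> L" for y
  proof (rule linear_coeff_zero_if_quadratic_nonneg)
    fix t :: real
    have "l + t *\<^sub>R y \<in> L"
      using l(1) L(1) y by (intro subspace_add subspace_scale)
    then have "Q (l - x) \<le> Q (l + t *\<^sub>R y - x)"
      using l(2) by blast
    also have "Q (l + t *\<^sub>R y - x) = Q (l - x) + t\<^sup>2 * Q y + 2 * t * Im (\<omega> (l - x) y)"
      using Q_add[of "l - x" "t *\<^sub>R y"] by (simp add: Q_scaleR omega_scaleR_right algebra_simps)
    finally show "0 \<le> 2 * t * Im (\<omega> (l - x) y) + t\<^sup>2 * Q y"
      by simp
  qed
  have "\<omega> (x - l) y = 0" if y: "y \<in> L" for y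
  proof -
    have "Re (\<omega> (l - x) y) = 0"
      using Im_0[of "J y"] L(2) y by (simp add: omega_J_right)
    then have "\<omega> (l - x) y = 0"
      using Im_0[OF y] by (simp add: complex_eq_iff)
    then show ?thesis
      using omega.minus_left[of "l - x" y] by simp
  qed
  then show ?thesis
    unfolding symp_orth_def by blast
qed

lemma symp_orth_decomposition:
  assumes "closed_csubspace J L" "c > 0" "\<forall>y\<in>L. c * (norm y)\<^sup>2 \<le> Q y"
  shows "\<exists>l\<in>L. x - l \<in> symp_orth \<omega> L"
proof -
  have L: "closed L" "subspace L" "\<forall>y\<in>L. J y \<in> L"
    using assms(1) unfolding closed_csubspace_def by auto
  obtain l where "l \<in> L" "\<forall>l'\<in>L. Q (l - x) \<le> Q (l' - x)"
    using exists_Q_diff_minimizer[OF L(1,2) assms(2,3)] by blast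
  then show ?thesis
    using Q_diff_minimizer_in_symp_orth[OF L(2,3)] by blast
qed

lemma norm_symp_orth_decomposition_le:
  assumes K: "0 \<le> K" "\<And>a b. norm (\<omega> a b) \<le> norm a * norm b * K"
    and c: "\<forall>y\<in>L. c * (norm y)\<^sup>2 \<le> Q y"
    and l: "l \<in> L" "x - l \<in> symp_orth \<omega> L"
  shows "c * norm l \<le> K * norm x"
proof (cases "l = 0")
  case False
  have "\<omega> (x - l) l = 0"
    using l unfolding symp_orth_def by blast
  have "c * (norm l)\<^sup>2 \<le> Q l"
    using c l(1) by blast
  also have "Q l = Im (\<omega> x l)"
    using \<open>\<omega> (x - l) l = 0\<close> unfolding Q_def by (simp add: omega.diff_left)
  also have "\<dots> \<le> norm x * norm l * K"
    using abs_Im_le_cmod[of "\<omega> x l"] K(2)[of x l] by simp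
  finally have "(c * norm l) * norm l \<le> (K * norm x) * norm l"
    by (simp add: power2_eq_square ac_simps)
  then show ?thesis
    using False by simp
qed (simp add: K(1))

section \<open>Uniform positivity from sequential compactness\<close>

lemma unit_vector_with_small_Q:
  assumes "subspace W" "\<not> (\<exists>c>0. \<forall>x\<in>W. c * (norm x)\<^sup>2 \<le> Q x)" "e > 0"
  shows "\<exists>y\<in>W. norm y = 1 \<and> Q y < e"
proof -
  obtain x where x: "x \<in> W" "Q x < e * (norm x)\<^sup>2"
    using assms(2,3) by (auto simp: not_le)
  then have "x \<noteq> 0"
    by auto
  define y where "y = inverse (norm x) *\<^sub>R x"
  have "y \<in> W"
    unfolding y_def using assms(1) x(1) by (rule subspace_scale)
  moreover have "norm y = 1"
    unfolding y_def using \<open>x \<noteq> 0\<close> by simp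
  moreover have "Q y = Q x / (norm x)\<^sup>2"
    unfolding y_def Q_scaleR by (simp add: power_inverse divide_inverse mult.commute)
  then have "Q y < e"
    using x(2) \<open>x \<noteq> 0\<close> by (simp add: divide_less_eq)
  ultimately show ?thesis
    by blast
qed

lemma coercive_if_Q_null_sequences_subconverge:
  assumes W: "closed W" "subspace W" "pos_def \<omega> W"
    and subconverge: "\<And>ys. \<forall>n. ys n \<in> W \<Longrightarrow> bounded (range ys) \<Longrightarrow> (\<lambda>n. Q (ys n)) \<longlonglongrightarrow> 0 \<Longrightarrow>
        \<exists>r z. strict_mono r \<and> (ys \<circ> r) \<longlonglongrightarrow> z"
  shows "\<exists>c>0. \<forall>x\<in>W. c * (norm x)\<^sup>2 \<le> Q x"
proof (rule ccontr)
  assume "\<not> ?thesis"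
  then have "\<forall>n. \<exists>y\<in>W. norm y = 1 \<and> Q y < inverse (real (Suc n))"
    using unit_vector_with_small_Q[OF W(2)] by simp
  then obtain ys where ys: "\<forall>n. ys n \<in> W" "\<And>n. norm (ys n) = 1"
    "\<And>n. Q (ys n) < inverse (real (Suc n))"
    by metis
  have "(\<lambda>n. Q (ys n)) \<longlonglongrightarrow> 0"
  proof (rule tendsto_sandwich[OF _ _ tendsto_const LIMSEQ_inverse_real_of_nat])
    show "\<forall>\<^sub>F n in sequentially. 0 \<le> Q (ys n)"
      using Q_nonneg_if_pos_def[OF W(3)] ys(1) by simp
    show "\<forall>\<^sub>F n in sequentially. Q (ys n) \<le> inverse (real (Suc n))"
      using ys(3) by (simp add: less_imp_le)
  qed
  moreover have "bounded (range ys)"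
    unfolding bounded_iff using ys(2) by (intro exI[of _ 1]) simp
  ultimately obtain r z where r: "strict_mono r" "(ys \<circ> r) \<longlonglongrightarrow> z"
    using subconverge ys(1) by blast
  have "z \<in> W"
    using closed_sequentially[OF W(1) _ r(2)] ys(1) by simp
  moreover have "norm z = 1"
    using tendsto_norm[OF r(2)] ys(2) LIMSEQ_unique[OF _ tendsto_const] by (simp add: o_def)
  moreover have "Q z = 0"
    using Q_tendsto[OF r(2)] LIMSEQ_subseq_LIMSEQ[OF \<open>(\<lambda>n. Q (ys n)) \<longlonglongrightarrow> 0\<close> r(1)]
    by (simp add: o_def LIMSEQ_unique)
  ultimately show False
    using W(3) unfolding pos_def_def Q_eq by force
qed

section \<open>Finite-dimensional \<open>L\<close>\<close>

lemma J_mem_span: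
  assumes "\<And>x. x \<in> X \<Longrightarrow> J x \<in> span X" "y \<in> span X"
  shows "J y \<in> span X"
proof -
  have "J ` span X = span (J ` X)"
    by (rule span_linear_image[OF linear_J, symmetric])
  also have "\<dots> \<subseteq> span X"
    using assms(1) by (intro span_minimal) auto
  finally show ?thesis
    using assms(2) by blast
qed

lemma pos_def_span_insert_symp_orth:
  assumes L: "subspace L" "pos_def \<omega> L"
    and m: "m \<in> symp_orth \<omega> L" "Q m > 0"
  shows "pos_def \<omega> (span (insert m (insert (J m) L)))"
  unfolding pos_def_def Q_eq
proof (intro ballI impI)
  fix x assume x: "x \<in> span (insert m (insert (J m) L))" "x \<noteq> 0"
  moreover have "span L = L"
    using L(1) by simp
  ultimately obtain a b where "x - a *\<^sub>R m - b *\<^sub>R J m \<in> L"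
    by (auto simp: span_insert)
  moreover define l where "l = x - a *\<^sub>R m - b *\<^sub>R J m"
  ultimately have l: "l \<in> L" "x = l + cscale J (Complex a b) m"
    unfolding cscale_def by simp_all
  have "\<omega> m l = 0"
    using m(1) l(1) unfolding symp_orth_def by blast
  then have "\<omega> l m = 0"
    by (rule omega_eq_0_commute)
  then have Q_x: "Q x = Q l + (cmod (Complex a b))\<^sup>2 * Q m"
    unfolding l(2) by (simp add: Q_add Q_cscale omega_cscale_right)
  have "0 \<le> Q l"
    using L(2) l(1) by (rule Q_nonneg_if_pos_def)
  show "0 < Q x"
  proof (cases "Complex a b = 0")
    case True
    then have "l \<noteq> 0"
      using x(2) l(2) by (simp add: cscale_def)
    then show ?thesis
      using L(2) l(1) Q_x True unfolding pos_def_def Q_eq by simp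
  next
    case False
    then show ?thesis
      using Q_x \<open>0 \<le> Q l\<close> m(2) by (simp add: add_nonneg_pos)
  qed
qed

lemma closed_csubspace_span_insert:
  assumes L: "subspace L" "\<forall>y\<in>L. J y \<in> L" "fin_dim L"
  shows "closed_csubspace J (span (insert m (insert (J m) L)))"
proof -
  obtain B where B: "B \<subseteq> L" "finite B" "span B = L"
    using fin_dim_obtain_basis[OF L(3,1)] by blast
  have "span L = L"
    using L(1) by simp
  then have N_eq: "span (insert m (insert (J m) L)) = span (insert m (insert (J m) B))"
    using B(3) by (simp add: set_eq_iff span_insert)
  have "J x \<in> span (insert m (insert (J m) B))" if x: "x \<in> insert m (insert (J m) B)" for x
  proof -
    consider "x = m" | "x = J m" | "x \<in> B"
      using x by blast
    then show ?thesis
    proof cases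
      case 3
      then have "J x \<in> span B"
        using B L(2) by blast
      moreover have "span B \<subseteq> span (insert m (insert (J m) B))"
        by (rule span_mono) blast
      ultimately show ?thesis
        by blast
    qed (simp_all add: span_base span_neg)
  qed
  then show ?thesis
    unfolding closed_csubspace_def N_eq using B(2)
    by (auto intro: closed_span_finite J_mem_span)
qed

lemma Q_nonpos_on_symp_orth:
  assumes max: "max_pos_def J \<omega> L" and fin: "fin_dim L"
    and m: "m \<in> symp_orth \<omega> L"
  shows "Q m \<le> 0"
proof (rule ccontr)
  assume "\<not> Q m \<le> 0"
  then have Q_m: "Q m > 0" by simp
  have L: "subspace L" "\<forall>y\<in>L. J y \<in> L" "pos_def \<omega> L"
    and maximal: "\<not> (\<exists>M. closed_csubspace J M \<and> pos_def \<omega> M \<and> L \<subset> M)"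
    using max unfolding max_pos_def_def closed_csubspace_def by auto
  define N where "N = span (insert m (insert (J m) L))"
  have "L \<subseteq> N"
    using span_superset[of "insert m (insert (J m) L)"] unfolding N_def by blast
  moreover have "m \<in> N"
    unfolding N_def by (simp add: span_base)
  moreover have "m \<notin> L"
    using m Q_m unfolding symp_orth_def Q_def by auto
  moreover have "closed_csubspace J N"
    unfolding N_def using L(1,2) fin by (rule closed_csubspace_span_insert)
  moreover have "pos_def \<omega> N"
    unfolding N_def using L(1,3) m Q_m by (rule pos_def_span_insert_symp_orth)
  ultimately show False
    using maximal by blast
qed

lemma fin_dim_if_pos_def:
  assumes L: "max_pos_def J \<omega> L" "fin_dim L"
    and W: "subspace W" "pos_def \<omega> W"
  shows "fin_dim W"
proof -
  obtain B where B: "finite B" "L \<subseteq> span B"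
    using L(2) unfolding fin_dim_def by blast
  define F where "F = (\<lambda>b x. Re (\<omega> x b)) ` B \<union> (\<lambda>b x. Im (\<omega> x b)) ` B"
  have "finite F"
    unfolding F_def using B(1) by simp
  moreover have "\<forall>\<psi>\<in>F. linear \<psi>"
    unfolding F_def
    by (auto intro!: linearI simp: omega_add_left omega_scaleR_left)
  moreover have "\<forall>x\<in>W. (\<forall>\<psi>\<in>F. \<psi> x = 0) \<longrightarrow> x = 0"
  proof (intro ballI impI)
    fix x assume x: "x \<in> W" "\<forall>\<psi>\<in>F. \<psi> x = 0"
    have "B \<subseteq> {y. \<omega> x y = 0}"
      using x(2) unfolding F_def by (auto simp: complex_eq_iff)
    moreover have "subspace {y. \<omega> x y = 0}"
      by (rule real_vector.linear_subspace_kernel, rule bounded_linear.linear,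
          rule omega.bounded_linear_right)
    ultimately have "L \<subseteq> {y. \<omega> x y = 0}"
      using B(2) span_minimal by blast
    then have "x \<in> symp_orth \<omega> L"
      unfolding symp_orth_def by blast
    then have "Q x \<le> 0"
      by (rule Q_nonpos_on_symp_orth[OF L])
    then show "x = 0"
      using W(2) x(1) unfolding pos_def_def Q_eq by force
  qed
  ultimately show ?thesis
    by (rule fin_dim_if_joint_kernel_trivial[OF _ _ W(1)])
qed

section \<open>Finite-dimensional symplectic complement of \<open>L\<close>\<close>

lemma max_compl_pos_def_coercive:
  assumes "max_compl_pos_def J \<omega> L"
  shows "\<exists>c>0. \<forall>y\<in>L. c * (norm y)\<^sup>2 \<le> Q y"
  using assms unfolding max_compl_pos_def_def Q_eq by blast

text \<open>For \<open>y\<^sub>i = l\<^sub>i + m\<^sub>i\<close> with \<open>l\<^sub>i \<in> L\<close>, \<open>m\<^sub>i \<in> L\<^sup>\<perp>\<close>, the form splits as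
  \<open>Q (y\<^sub>1 - y\<^sub>2) = Q (l\<^sub>1 - l\<^sub>2) + Q (m\<^sub>1 - m\<^sub>2)\<close>, and \<open>Q (y\<^sub>1 - y\<^sub>2)\<close> is controlled by the
  parallelogram law as soon as \<open>Q (y\<^sub>1 + y\<^sub>2) \<ge> 0\<close>.\<close>

lemma norm_diff_symp_orth_parts_le:
  assumes K: "\<And>a b. norm (\<omega> a b) \<le> norm a * norm b * K"
    and L: "subspace L" "\<forall>y\<in>L. c * (norm y)\<^sup>2 \<le> Q y"
    and l: "l\<^sub>1 \<in> L" "l\<^sub>2 \<in> L" and m: "m\<^sub>1 \<in> symp_orth \<omega> L" "m\<^sub>2 \<in> symp_orth \<omega> L"
    and sum_nonneg: "0 \<le> Q ((l\<^sub>1 + m\<^sub>1) + (l\<^sub>2 + m\<^sub>2))"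
  shows "c * (norm (l\<^sub>1 - l\<^sub>2))\<^sup>2 \<le> 2 * Q (l\<^sub>1 + m\<^sub>1) + 2 * Q (l\<^sub>2 + m\<^sub>2) + K * (norm (m\<^sub>1 - m\<^sub>2))\<^sup>2"
proof -
  have l_diff: "l\<^sub>1 - l\<^sub>2 \<in> L"
    using subspace_diff[OF L(1) l] .
  have "m\<^sub>1 - m\<^sub>2 \<in> symp_orth \<omega> L"
    using subspace_diff[OF subspace_symp_orth m] .
  then have "\<omega> (m\<^sub>1 - m\<^sub>2) (l\<^sub>1 - l\<^sub>2) = 0"
    using l_diff unfolding symp_orth_def by blast
  then have "\<omega> (l\<^sub>1 - l\<^sub>2) (m\<^sub>1 - m\<^sub>2) = 0"
    by (rule omega_eq_0_commute)
  moreover have diff_eq: "(l\<^sub>1 + m\<^sub>1) - (l\<^sub>2 + m\<^sub>2) = (l\<^sub>1 - l\<^sub>2) + (m\<^sub>1 - m\<^sub>2)"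
    by (simp add: algebra_simps)
  ultimately have "Q ((l\<^sub>1 + m\<^sub>1) - (l\<^sub>2 + m\<^sub>2)) = Q (l\<^sub>1 - l\<^sub>2) + Q (m\<^sub>1 - m\<^sub>2)"
    unfolding diff_eq by (simp add: Q_add)
  moreover have "c * (norm (l\<^sub>1 - l\<^sub>2))\<^sup>2 \<le> Q (l\<^sub>1 - l\<^sub>2)"
    using L(2) l_diff by blast
  moreover have "- Q (m\<^sub>1 - m\<^sub>2) \<le> K * (norm (m\<^sub>1 - m\<^sub>2))\<^sup>2"
    using abs_Q_le[OF K, of "m\<^sub>1 - m\<^sub>2"] by linarith
  ultimately show ?thesis
    using Q_parallelogram[of "l\<^sub>1 + m\<^sub>1" "l\<^sub>2 + m\<^sub>2"] sum_nonneg by linarith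
qed

lemma bounded_range_symp_orth_part:
  assumes c: "c > 0" "\<forall>y\<in>L. c * (norm y)\<^sup>2 \<le> Q y"
    and ls: "\<And>n. ls n \<in> L" "\<And>n. ys n - ls n \<in> symp_orth \<omega> L"
    and "bounded (range ys)"
  shows "bounded (range (\<lambda>n. ys n - ls n))"
proof -
  obtain K where K: "K > 0" "\<And>a b. norm (\<omega> a b) \<le> norm a * norm b * K"
    using omega.pos_bounded by blast
  obtain M where M: "\<And>n. norm (ys n) \<le> M"
    using assms(5) by (auto simp: bounded_iff)
  have "norm (ys n - ls n) \<le> M + K * M / c" for n
  proof -
    have "c * norm (ls n) \<le> K * M"
      using norm_symp_orth_decomposition_le[OF less_imp_le[OF K(1)] K(2) c(2) ls(1)[of n] ls(2)[of n]]
        mult_left_mono[OF M[of n] less_imp_le[OF K(1)]] by linarith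
    then have "norm (ls n) \<le> K * M / c"
      using c(1) by (simp add: pos_le_divide_eq mult.commute)
    then show ?thesis
      using norm_triangle_ineq4[of "ys n" "ls n"] M[of n] by linarith
  qed
  then show ?thesis
    unfolding bounded_iff by (intro exI[of _ "M + K * M / c"]) auto
qed

lemma Cauchy_if_symp_orth_part_converges:
  assumes L: "subspace L" "c > 0" "\<forall>y\<in>L. c * (norm y)\<^sup>2 \<le> Q y"
    and W: "subspace W" "\<forall>x\<in>W. 0 \<le> Q x"
    and ys: "\<forall>n. ys n \<in> W" "(\<lambda>n. Q (ys n)) \<longlonglongrightarrow> 0"
    and ls: "\<And>n. ls n \<in> L" "\<And>n. ys n - ls n \<in> symp_orth \<omega> L"
    and ms: "(\<lambda>n. ys n - ls n) \<longlonglongrightarrow> m"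
  shows "Cauchy ls"
proof -
  obtain K where K: "K > 0" "\<And>a b. norm (\<omega> a b) \<le> norm a * norm b * K"
    using omega.pos_bounded by blast
  define e where "e n = norm (ys n - ls n - m)" for n
  have "e \<longlonglongrightarrow> 0"
    unfolding e_def using ms by (intro tendsto_norm_zero LIM_zero)
  define \<alpha> where "\<alpha> n = (2 * Q (ys n) + 2 * K * (e n)\<^sup>2) / c" for n
  have "(norm (ls n - ls k))\<^sup>2 \<le> \<alpha> n + \<alpha> k" for n k
  proof -
    have ms_diff: "(norm ((ys n - ls n) - (ys k - ls k)))\<^sup>2 \<le> 2 * (e n)\<^sup>2 + 2 * (e k)\<^sup>2"
    proof -
      have "norm ((ys n - ls n) - (ys k - ls k)) \<le> e n + e k"
        unfolding e_def using norm_triangle_ineq4[of "ys n - ls n - m" "ys k - ls k - m"] by simp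
      then have "(norm ((ys n - ls n) - (ys k - ls k)))\<^sup>2 \<le> (e n + e k)\<^sup>2"
        by (rule power_mono) simp
      also have "\<dots> \<le> 2 * (e n)\<^sup>2 + 2 * (e k)\<^sup>2"
        using zero_le_power2[of "e n - e k"] by (simp add: power2_eq_square algebra_simps)
      finally show ?thesis .
    qed
    have "0 \<le> Q (ys n + ys k)"
      using W ys(1) by (simp add: subspace_add)
    then have "c * (norm (ls n - ls k))\<^sup>2
        \<le> 2 * Q (ys n) + 2 * Q (ys k) + K * (norm ((ys n - ls n) - (ys k - ls k)))\<^sup>2"
      using norm_diff_symp_orth_parts_le[OF K(2) L(1,3) ls(1)[of n] ls(1)[of k] ls(2)[of n] ls(2)[of k]]
      by simp
    also have "\<dots> \<le> 2 * Q (ys n) + 2 * Q (ys k) + K * (2 * (e n)\<^sup>2 + 2 * (e k)\<^sup>2)"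
      using ms_diff K(1) by simp
    also have "\<dots> = c * (\<alpha> n + \<alpha> k)"
      using L(2) by (simp add: \<alpha>_def field_simps)
    finally show ?thesis
      using L(2) by simp
  qed
  moreover have "\<alpha> \<longlonglongrightarrow> (2 * 0 + 2 * K * 0\<^sup>2) / c"
    unfolding \<alpha>_def using ys(2) \<open>e \<longlonglongrightarrow> 0\<close> L(2) by (intro tendsto_intros) simp_all
  ultimately show ?thesis
    by (intro Cauchy_if_dist_square_le_sum[of ls \<alpha>]) simp_all
qed

lemma convergent_subseq_if_fin_dim_symp_orth:
  assumes L: "max_compl_pos_def J \<omega> L" "fin_dim (symp_orth \<omega> L)"
    and W: "subspace W" "\<forall>x\<in>W. 0 \<le> Q x"
    and ys: "\<forall>n. ys n \<in> W" "bounded (range ys)" "(\<lambda>n. Q (ys n)) \<longlonglongrightarrow> 0"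
  shows "\<exists>r z. strict_mono r \<and> (ys \<circ> r) \<longlonglongrightarrow> z"
proof -
  have L_sub: "closed_csubspace J L"
    using L(1) unfolding max_compl_pos_def_def max_pos_def_def by blast
  then have "subspace L"
    unfolding closed_csubspace_def by blast
  obtain c where c: "c > 0" "\<forall>y\<in>L. c * (norm y)\<^sup>2 \<le> Q y"
    using max_compl_pos_def_coercive[OF L(1)] by blast
  have "\<forall>n. \<exists>l\<in>L. ys n - l \<in> symp_orth \<omega> L"
    using symp_orth_decomposition[OF L_sub c] by blast
  then obtain ls where ls: "\<And>n. ls n \<in> L" "\<And>n. ys n - ls n \<in> symp_orth \<omega> L"
    by metis
  obtain B where B: "finite B" "symp_orth \<omega> L \<subseteq> span B"
    using L(2) unfolding fin_dim_def by blast
  have "bounded (range (\<lambda>n. ys n - ls n))"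
    using c ls ys(2) by (rule bounded_range_symp_orth_part)
  then have "\<exists>m\<in>span B. \<exists>r. strict_mono r \<and> ((\<lambda>n. ys n - ls n) \<circ> r) \<longlonglongrightarrow> m"
    using ls(2) B(2) by (intro bounded_sequence_in_finite_span_subconverges[OF B(1)]) auto
  then obtain m r where r: "strict_mono r" "((\<lambda>n. ys n - ls n) \<circ> r) \<longlonglongrightarrow> m"
    by blast
  have "Cauchy (ls \<circ> r)"
  proof (rule Cauchy_if_symp_orth_part_converges[where ys = "ys \<circ> r", OF \<open>subspace L\<close> c W])
    show "\<forall>n. (ys \<circ> r) n \<in> W"
      using ys(1) by simp
    show "(\<lambda>n. Q ((ys \<circ> r) n)) \<longlonglongrightarrow> 0"
      using LIMSEQ_subseq_LIMSEQ[OF ys(3) r(1)] by (simp add: o_def)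
    show "(ls \<circ> r) n \<in> L" "(ys \<circ> r) n - (ls \<circ> r) n \<in> symp_orth \<omega> L" for n
      using ls by simp_all
    show "(\<lambda>n. (ys \<circ> r) n - (ls \<circ> r) n) \<longlonglongrightarrow> m"
      using r(2) by (simp add: o_def)
  qed
  then obtain l where "(ls \<circ> r) \<longlonglongrightarrow> l"
    using Cauchy_convergent_iff convergent_def by blast
  then have "(\<lambda>n. (ls \<circ> r) n + ((\<lambda>n. ys n - ls n) \<circ> r) n) \<longlonglongrightarrow> l + m"
    using r(2) by (rule tendsto_add)
  then have "(ys \<circ> r) \<longlonglongrightarrow> l + m"
    by (simp add: o_def)
  then show ?thesis
    using r(1) by blast
qed

lemma Q_null_sequence_subconverges:
  assumes L: "max_compl_pos_def J \<omega> L" "fin_dim L \<or> fin_dim (symp_orth \<omega> L)"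
    and W: "subspace W" "pos_def \<omega> W"
    and ys: "\<forall>n. ys n \<in> W" "bounded (range ys)" "(\<lambda>n. Q (ys n)) \<longlonglongrightarrow> 0"
  shows "\<exists>r z. strict_mono r \<and> (ys \<circ> r) \<longlonglongrightarrow> z"
  using L(2)
proof
  assume "fin_dim L"
  moreover have "max_pos_def J \<omega> L"
    using L(1) unfolding max_compl_pos_def_def by blast
  ultimately have "fin_dim W"
    using fin_dim_if_pos_def W by blast
  then obtain B where "finite B" "W \<subseteq> span B"
    unfolding fin_dim_def by blast
  then show ?thesis
    using bounded_sequence_in_finite_span_subconverges[of B ys] ys(1,2) by blast
next
  assume "fin_dim (symp_orth \<omega> L)"
  then show ?thesis
    using convergent_subseq_if_fin_dim_symp_orth[OF L(1) _ W(1) _ ys]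
      Q_nonneg_if_pos_def[OF W(2)] by blast
qed

end

theorem proposition2p12:
  fixes J :: "'a::{real_inner, complete_space} \<Rightarrow> 'a"
    and \<omega> :: "'a \<Rightarrow> 'a \<Rightarrow> complex"
    and W :: "'a set"
  assumes "complex_structure J"
    and "separable_space TYPE('a)"
    and "strong_symplectic J \<omega>"
    and "\<exists>L. max_compl_pos_def J \<omega> L \<and> (fin_dim L \<or> fin_dim (symp_orth \<omega> L))"
    and "max_pos_def J \<omega> W"
  shows "max_compl_pos_def J \<omega> W"
proof -
  interpret symplectic_hilbert J \<omega>
    using assms(1,3) by unfold_locales
  obtain L where L: "max_compl_pos_def J \<omega> L" "fin_dim L \<or> fin_dim (symp_orth \<omega> L)"
    using assms(4) by blast
  have W: "closed W" "subspace W" "pos_def \<omega> W"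
    using assms(5) unfolding max_pos_def_def closed_csubspace_def by auto
  have "\<exists>c>0. \<forall>x\<in>W. c * (norm x)\<^sup>2 \<le> Q x"
    by (rule coercive_if_Q_null_sequences_subconverge[OF W Q_null_sequence_subconverges[OF L W(2,3)]])
  then show ?thesis
    using assms(5) unfolding max_compl_pos_def_def Q_eq by blast
qed

end
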